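(* Let $(U,d)$ be an asymmetric pseudometric space, $k\ge 2$ an integer, $R>0$, and let $U'$ be the output of Cluster$(U,d,R)$. Let $G$ be the digraph on vertex set $U'$ with an arc $ij$ ($i\ne j$) iff $d(i,j)<\frac{R}{2k}$. Then every directed cycle in $G$ has at least $2k+2$ distinct vertices.
   Context: An asymmetric pseudometric space $(U,d)$ is a finite set $U$ with $d:U\times U\to\mathbb{R}_{\ge 0}$ such that $d(u,u)=0$ and $d(u,v)\le d(u,w)+d(w,v)$ for all $u,v,w\in U$ ($d$ need not be symmetric). $d_{\max}(u,v)=\max\{d(u,v),d(v,u)\}$. Cluster$(U,d,R)$: initially all points are unmarked; while an unmarked point exists, choose any unmarked point $c$, let $A=\{v\in U\text{ unmarked}: d_{\max}(c,v)<R\}$, mark all points of $A$, and add $c$ to the output set $U'$. It returns $U'$. *)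

theory Defs
  imports Complex_Main
begin

definition asym_pseudometric :: "'a set \<Rightarrow> ('a \<Rightarrow> 'a \<Rightarrow> real) \<Rightarrow> bool" where
  "asym_pseudometric U d \<longleftrightarrow> finite U \<and>
     (\<forall>u\<in>U. \<forall>v\<in>U. d u v \<ge> 0) \<and>
     (\<forall>u\<in>U. d u u = 0) \<and>
     (\<forall>u\<in>U. \<forall>v\<in>U. \<forall>w\<in>U. d u v \<le> d u w + d w v)"

definition dmax :: "('a \<Rightarrow> 'a \<Rightarrow> real) \<Rightarrow> 'a \<Rightarrow> 'a \<Rightarrow> real" where
  "dmax d u v = max (d u v) (d v u)"

text \<open>Reachable states (unmarked points, output set so far) of the nondeterministic
  procedure Cluster(U,d,R).\<close>
inductive cluster_state :: "'a set \<Rightarrow> ('a \<Rightarrow> 'a \<Rightarrow> real) \<Rightarrow> real \<Rightarrow> 'a set \<Rightarrow> 'a set \<Rightarrow> bool"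
  for U d R where
  init: "cluster_state U d R U {}"
| step: "cluster_state U d R M Out \<Longrightarrow> c \<in> M \<Longrightarrow>
         cluster_state U d R (M - {v \<in> M. dmax d c v < R}) (insert c Out)"

text \<open>U' is a possible output of Cluster(U,d,R): the loop terminates when no unmarked
  point remains.\<close>
definition cluster_output :: "'a set \<Rightarrow> ('a \<Rightarrow> 'a \<Rightarrow> real) \<Rightarrow> real \<Rightarrow> 'a set \<Rightarrow> bool" where
  "cluster_output U d R U' \<longleftrightarrow> cluster_state U d R {} U'"

definition dir_cycle :: "'a set \<Rightarrow> ('a \<Rightarrow> 'a \<Rightarrow> bool) \<Rightarrow> 'a list \<Rightarrow> bool" where
  "dir_cycle V E vs \<longleftrightarrow> vs \<noteq> [] \<and> distinct vs \<and> set vs \<subseteq> V \<and>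
     (\<forall>i < length vs. E (vs ! i) (vs ! ((i + 1) mod length vs)))"

end

theory Submission
  imports Defs
begin

text \<open>Distinct centres chosen by Cluster are at \<open>dmax\<close>-distance at least \<open>R\<close>. In a directed
  cycle \<open>v\<^sub>0 \<rightarrow> v\<^sub>1 \<rightarrow> \<dots> \<rightarrow> v\<^sub>L\<^sub>-\<^sub>1 \<rightarrow> v\<^sub>0\<close> whose arcs are shorter than \<open>R/(2k)\<close>, the
  arc \<open>v\<^sub>0 \<rightarrow> v\<^sub>1\<close> is short, and by the triangle inequality the way back from \<open>v\<^sub>1\<close> to
  \<open>v\<^sub>0\<close> around the cycle has length below \<open>(L - 1) R/(2k)\<close>. Hence \<open>L \<le> 2k + 1\<close> would
  give \<open>dmax d v\<^sub>0 v\<^sub>1 < R\<close>.\<close>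

lemma cluster_state_subset:
  assumes "cluster_state U d R M Out"
  shows "M \<subseteq> U \<and> Out \<subseteq> U"
  using assms by induction auto

lemma cluster_state_separated:
  assumes "cluster_state U d R M Out"
  shows "(\<forall>c\<in>Out. \<forall>v\<in>M. R \<le> dmax d c v) \<and> (\<forall>a\<in>Out. \<forall>b\<in>Out. a \<noteq> b \<longrightarrow> R \<le> dmax d a b)"
  using assms
proof induction
  case init
  then show ?case by simp
next
  case (step M Out c)
  txt \<open>The new centre \<open>c\<close> was still unmarked, so the first conjunct puts it far from
    all earlier centres.\<close>
  have "dmax d a b = dmax d b a" for a b
    unfolding dmax_def by simp
  with step show ?case
    by (metis (mono_tags, lifting) Diff_iff insert_iff mem_Collect_eq not_le)
qed

lemma cluster_output_separated:
  assumes "cluster_output U d R U'" "a \<in> U'" "b \<in> U'" "a \<noteq> b"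
  shows "R \<le> dmax d a b"
  using assms cluster_state_separated unfolding cluster_output_def by blast

lemma cluster_output_subset:
  assumes "cluster_output U d R U'"
  shows "U' \<subseteq> U"
  using assms cluster_state_subset unfolding cluster_output_def by blast

lemma asym_pseudometric_le_sum_steps:
  assumes "asym_pseudometric U d" "i \<le> j" "\<And>l. l \<in> {i..j} \<Longrightarrow> f l \<in> U"
  shows "d (f i) (f j) \<le> (\<Sum>l\<in>{i..<j}. d (f l) (f (Suc l)))"
  using assms(2,3)
proof (induction j rule: dec_induct)
  case base
  then show ?case
    using assms(1) unfolding asym_pseudometric_def by simp
next
  case (step j)
  have "d (f i) (f (Suc j)) \<le> d (f i) (f j) + d (f j) (f (Suc j))"
    using assms(1) step.prems step.hyps unfolding asym_pseudometric_def by simp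
  also have "\<dots> \<le> (\<Sum>l\<in>{i..<Suc j}. d (f l) (f (Suc l)))"
    using step by simp
  finally show ?case .
qed

lemma dir_cycle_length_ge_2:
  assumes "dir_cycle V E vs" "\<And>x. \<not> E x x"
  shows "2 \<le> length vs"
proof (rule ccontr)
  assume "\<not> 2 \<le> length vs"
  moreover have "length vs \<noteq> 0"
    using assms(1) unfolding dir_cycle_def by simp
  ultimately have "length vs = 1"
    by linarith
  with assms show False
    unfolding dir_cycle_def by auto
qed

lemma dir_cycle_dmax_lt:
  assumes metric: "asym_pseudometric U d" and "V \<subseteq> U"
    and cyc: "dir_cycle V (\<lambda>i j. i \<noteq> j \<and> d i j < e) vs"
  defines "L \<equiv> length vs"
  shows "dmax d (vs ! 0) (vs ! 1) < real (L - 1) * e"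
proof -
  have L2: "2 \<le> L"
    using dir_cycle_length_ge_2[OF cyc] unfolding L_def by simp
  have arc: "d (vs ! l) (vs ! ((l + 1) mod L)) < e" if "l < L" for l
    using cyc that unfolding dir_cycle_def L_def by simp
  have "set vs \<subseteq> U"
    using cyc \<open>V \<subseteq> U\<close> unfolding dir_cycle_def by blast
  define f where "f l = vs ! (l mod L)" for l
  have f_in: "f l \<in> U" for l
  proof -
    have "l mod L < length vs"
      using L2 unfolding L_def by (intro mod_less_divisor) linarith
    then show ?thesis
      using \<open>set vs \<subseteq> U\<close> unfolding f_def by (meson nth_mem subsetD)
  qed
  then have "0 \<le> d (f 0) (f 1)"
    using metric unfolding asym_pseudometric_def by blast
  with arc[of 0] L2 have "e > 0"
    by (simp add: f_def)
  from f_in have "d (f 1) (f L) \<le> (\<Sum>l\<in>{1..<L}. d (f l) (f (Suc l)))"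
    using asym_pseudometric_le_sum_steps[OF metric] L2 by simp
  also have "\<dots> < (\<Sum>l\<in>{1..<L}. e)"
    using L2 arc by (intro sum_strict_mono) (auto simp: f_def)
  finally have way_back: "d (vs ! 1) (vs ! 0) < real (L - 1) * e"
    using L2 by (simp add: f_def)
  have "d (vs ! 0) (vs ! 1) < e"
    using arc[of 0] L2 by simp
  also have "\<dots> \<le> real (L - 1) * e"
    using L2 \<open>e > 0\<close> by simp
  finally show ?thesis
    using way_back unfolding dmax_def by simp
qed

theorem lemma5p4:
  fixes U U' :: "'a set" and d :: "'a \<Rightarrow> 'a \<Rightarrow> real" and k :: nat and R :: real
  assumes "asym_pseudometric U d"
    and "k \<ge> 2"
    and "R > 0"
    and "cluster_output U d R U'"
  shows "\<forall>vs. dir_cycle U' (\<lambda>i j. i \<noteq> j \<and> d i j < R / (2 * real k)) vs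
               \<longrightarrow> length vs \<ge> 2 * k + 2"
proof (intro allI impI)
  fix vs
  assume cyc: "dir_cycle U' (\<lambda>i j. i \<noteq> j \<and> d i j < R / (2 * real k)) vs"
  have L2: "2 \<le> length vs"
    using dir_cycle_length_ge_2[OF cyc] by simp
  with cyc have "vs ! 0 \<in> U'" "vs ! 1 \<in> U'" "vs ! 0 \<noteq> vs ! 1"
    unfolding dir_cycle_def by (auto simp: nth_eq_iff_index_eq)
  then have "R \<le> dmax d (vs ! 0) (vs ! 1)"
    using cluster_output_separated[OF assms(4)] by simp
  also have "\<dots> < real (length vs - 1) * (R / (2 * real k))"
    using dir_cycle_dmax_lt[OF assms(1) cluster_output_subset[OF assms(4)] cyc] by simp
  finally have "real (2 * k) < real (length vs - 1)"
    using assms(2,3) by (simp add: field_simps)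
  then show "length vs \<ge> 2 * k + 2"
    by linarith
qed

end
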